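(* Let $\Gamma_1=(u\xrightarrow{p}x\xrightarrow{q}v)$ be a path of length $2$ in $B(\mathfrak S_n)$, and let $\Gamma_2=(u\xrightarrow{s}y\xrightarrow{t}v)$ be the flip of $\Gamma_1$. Then: (1) if $p$ and $q$ commute, then $s=q$ and $t=p$; (2) if $p=(a,b)$ and $q=(a,c)$ (with $a,b,c$ distinct), then: - if $a<b<c$ or $a>b>c$, then $s=(b,c)$ and $t=(a,b)$; - if $a<c<b$ or $a>c>b$, then $s=(a,c)$ and $t=(b,c)$; - if $b<a<c$ or $b>a>c$, then: if $u^{-1}(b)<u^{-1}(a)<u^{-1}(c)$ or $u^{-1}(c)<u^{-1}(a)<u^{-1}(b)$, then $s=(a,c)$ and $t=(b,c)$; otherwise $s=(b,c)$ and $t=(a,b)$.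
   Context: $\mathfrak S_n$ is the symmetric group on $[n]$, $T$ its set of transpositions, $\ell$ the length w.r.t. simple transpositions $(i,i+1)$. The Bruhat graph $B(\mathfrak S_n)$ is the edge-labelled directed graph on $\mathfrak S_n$ with an edge $x\xrightarrow{t}y$ iff $yx^{-1}=t\in T$ and $\ell(x)<\ell(y)$. For any $x,y\in\mathfrak S_n$ the number of paths of length $2$ from $x$ to $y$ in $B(\mathfrak S_n)$ is $0$ or $2$; if $\Gamma$ is one of two such paths, the other one is called the flip of $\Gamma$. $u^{-1}$ is the inverse permutation. *)

theory Defs
  imports "HOL-Combinatorics.Combinatorics"
begin

definition Sym :: "nat \<Rightarrow> (nat \<Rightarrow> nat) set" where
  "Sym n = {w. w permutes {1..n}}"

definition Transp :: "nat \<Rightarrow> (nat \<Rightarrow> nat) set" where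
  "Transp n = {transpose a b | a b. a \<in> {1..n} \<and> b \<in> {1..n} \<and> a \<noteq> b}"

definition simple_word :: "nat list \<Rightarrow> nat \<Rightarrow> nat" where
  "simple_word is = foldr (\<lambda>i f. transpose i (Suc i) \<circ> f) is id"

definition len :: "nat \<Rightarrow> (nat \<Rightarrow> nat) \<Rightarrow> nat" where
  "len n w = (LEAST k. \<exists>is. length is = k \<and> (\<forall>i\<in>set is. 1 \<le> i \<and> i < n) \<and> w = simple_word is)"

definition bruhat_edge :: "nat \<Rightarrow> (nat \<Rightarrow> nat) \<Rightarrow> (nat \<Rightarrow> nat) \<Rightarrow> (nat \<Rightarrow> nat) \<Rightarrow> bool" where
  "bruhat_edge n x t y \<longleftrightarrow> x \<in> Sym n \<and> y \<in> Sym n \<and> t \<in> Transp n \<and> y \<circ> inv x = t \<and> len n x < len n y"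

end

theory Submission
  imports Defs
begin

text \<open>
  The length of a permutation of \<open>{1..n}\<close> is its number of inversions. Multiplying \<open>w\<close> on the
  left by \<open>(a b)\<close>, \<open>a < b\<close>, swaps the values \<open>a\<close> and \<open>b\<close>; if \<open>a\<close> stood after \<open>b\<close> in \<open>w\<close>,
  this strictly decreases the number of inversions. So an edge \<open>w \<rightarrow> (a b) \<circ> w\<close> of the Bruhat
  graph with \<open>a < b\<close> forces \<open>inv w a < inv w b\<close>.

  The two paths give \<open>t \<circ> s = q \<circ> p\<close> with \<open>s \<noteq> p\<close>. A product of two distinct commuting
  transpositions factors into two transpositions only as \<open>q \<circ> p\<close> and \<open>p \<circ> q\<close>, and the 3-cycle
  \<open>(a c) \<circ> (a b)\<close> only as \<open>(a c) \<circ> (a b)\<close>, \<open>(a b) \<circ> (b c)\<close> and \<open>(b c) \<circ> (a c)\<close>. Which of the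
  last two is the flip is decided by applying the criterion above to all four edges, which
  compares the positions of \<open>a\<close>, \<open>b\<close>, \<open>c\<close> in \<open>u\<close>.
\<close>

text \<open>Inversions are recorded as pairs of values \<open>i < j\<close> with \<open>j\<close> placed before \<open>i\<close>, because
  Bruhat edges multiply on the left and hence act on values.\<close>

definition inversions :: "nat \<Rightarrow> (nat \<Rightarrow> nat) \<Rightarrow> (nat \<times> nat) set" where
  "inversions n w = {(i, j). i \<in> {1..n} \<and> j \<in> {1..n} \<and> i < j \<and> inv w j < inv w i}"

definition swap_pair :: "nat \<Rightarrow> nat \<Rightarrow> nat \<times> nat \<Rightarrow> nat \<times> nat" where
  "swap_pair a b ij = (if a < fst ij \<and> fst ij < b \<or> a < snd ij \<and> snd ij < b then ij
     else (min (transpose a b (fst ij)) (transpose a b (snd ij)),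
           max (transpose a b (fst ij)) (transpose a b (snd ij))))"

lemma finite_inversions: "finite (inversions n w)"
  by (rule finite_subset[of _ "{1..n} \<times> {1..n}"]) (auto simp: inversions_def)

lemma inv_transpose_comp: "bij w \<Longrightarrow> inv (transpose a b \<circ> w) = inv w \<circ> transpose a b"
  by (simp add: o_inv_distrib)

lemma inj_on_swap_pair: "a < b \<Longrightarrow> inj_on (swap_pair a b) {(i, j). i < j}"
  unfolding inj_on_def swap_pair_def transpose_def
  by (auto split: if_splits simp: min_def max_def)

lemma swap_pair_inversions_Suc_subset:
  assumes "bij w" "a \<in> {1..n}" "Suc a \<in> {1..n}"
  shows "swap_pair a (Suc a) ` inversions n (transpose a (Suc a) \<circ> w)
    \<subseteq> insert (a, Suc a) (inversions n w)"
  using assms unfolding inversions_def inv_transpose_comp[OF assms(1)] swap_pair_def transpose_def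
  by (auto split: if_splits simp: min_def max_def)

lemma swap_pair_inversions_subset:
  assumes "bij w" "a \<in> {1..n}" "b \<in> {1..n}" "a < b" "inv w b < inv w a"
  shows "swap_pair a b ` inversions n (transpose a b \<circ> w) \<subseteq> inversions n w - {(a, b)}"
  using assms unfolding inversions_def inv_transpose_comp[OF assms(1)] swap_pair_def transpose_def
  by (auto split: if_splits simp: min_def max_def)

lemma card_inversions_transpose_Suc_le:
  assumes "bij w" "a \<in> {1..n}" "Suc a \<in> {1..n}"
  shows "card (inversions n (transpose a (Suc a) \<circ> w)) \<le> card (inversions n w) + 1"
proof -
  have "inj_on (swap_pair a (Suc a)) (inversions n (transpose a (Suc a) \<circ> w))"
    by (rule inj_on_subset[OF inj_on_swap_pair]) (auto simp: inversions_def)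
  then have "card (inversions n (transpose a (Suc a) \<circ> w)) \<le> card (insert (a, Suc a) (inversions n w))"
    by (rule card_inj_on_le[OF _ swap_pair_inversions_Suc_subset[OF assms]]) (simp add: finite_inversions)
  then show ?thesis
    by (simp add: card_insert_if finite_inversions split: if_splits)
qed

lemma card_inversions_transpose_less:
  assumes "bij w" "a \<in> {1..n}" "b \<in> {1..n}" "a < b" "inv w b < inv w a"
  shows "card (inversions n (transpose a b \<circ> w)) < card (inversions n w)"
proof -
  have "inj_on (swap_pair a b) (inversions n (transpose a b \<circ> w))"
    by (rule inj_on_subset[OF inj_on_swap_pair[OF assms(4)]]) (auto simp: inversions_def)
  then have "card (inversions n (transpose a b \<circ> w)) \<le> card (inversions n w - {(a, b)})"
    by (rule card_inj_on_le[OF _ swap_pair_inversions_subset[OF assms]]) (simp add: finite_inversions)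
  also have "\<dots> < card (inversions n w)"
    using assms by (intro card_Diff1_less finite_inversions) (auto simp: inversions_def)
  finally show ?thesis .
qed

lemma simple_word_Nil: "simple_word [] = id"
  by (simp add: simple_word_def)

lemma simple_word_Cons: "simple_word (i # is) = transpose i (Suc i) \<circ> simple_word is"
  by (simp add: simple_word_def)

lemma bij_simple_word: "bij (simple_word is)"
proof (induction "is")
  case Nil
  show ?case unfolding simple_word_Nil by (rule bij_id)
next
  case (Cons i "is")
  show ?case unfolding simple_word_Cons by (rule bij_comp[OF Cons.IH bij_transpose])
qed

lemma card_inversions_simple_word_le:
  "\<forall>i\<in>set is. 1 \<le> i \<and> i < n \<Longrightarrow> card (inversions n (simple_word is)) \<le> length is"
proof (induction "is")
  case Nil
  have "inversions n (simple_word []) = {}" by (auto simp: inversions_def simple_word_Nil)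
  then show ?case by simp
next
  case (Cons i "is")
  have "card (inversions n (simple_word (i # is))) \<le> card (inversions n (simple_word is)) + 1"
    unfolding simple_word_Cons using Cons.prems
    by (intro card_inversions_transpose_Suc_le bij_simple_word) auto
  with Cons show ?case by simp
qed

lemma permutes_eq_id_if_no_descent:
  assumes w: "w permutes {1..n}" and ascent: "\<And>i. 1 \<le> i \<Longrightarrow> i < n \<Longrightarrow> inv w i < inv w (Suc i)"
  shows "w = id"
proof -
  have inv_w: "inv w permutes {1..n}" using w by (rule permutes_inv)
  define xs where "xs = map (inv w) [1..<Suc n]"
  have "sorted_wrt (<) xs"
    unfolding xs_def sorted_wrt_iff_nth_Suc_transp[OF transp_on_less]
    using ascent by (simp del: upt_Suc)
  moreover have "set xs = {1..n}"
    unfolding xs_def using permutes_image[OF inv_w]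
    by (simp only: set_map set_upt atLeastLessThanSuc_atLeastAtMost)
  ultimately have "xs = [1..<Suc n]"
    by (intro sorted_distinct_set_unique)
      (simp_all add: strict_sorted_iff atLeastLessThanSuc_atLeastAtMost del: upt_Suc)
  then have "map (inv w) [1..<Suc n] = map id [1..<Suc n]"
    unfolding xs_def list.map_id .
  then have "inv w k = k" for k
    using permutes_not_in[OF inv_w, of k] unfolding map_eq_conv
    by (cases "k \<in> {1..n}") (simp_all add: atLeastLessThanSuc_atLeastAtMost del: upt_Suc)
  then have "inv w = id"
    by auto
  then show ?thesis
    using w by (metis inv_id inv_inv_eq permutes_bij)
qed

lemma ex_simple_word_inversions:
  "w permutes {1..n} \<Longrightarrow>
    \<exists>is. length is \<le> card (inversions n w) \<and> (\<forall>i\<in>set is. 1 \<le> i \<and> i < n) \<and> w = simple_word is"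
proof (induction "card (inversions n w)" arbitrary: w rule: less_induct)
  case less
  show ?case
  proof (cases "w = id")
    case True
    then show ?thesis by (intro exI[of _ "[]"]) (simp add: simple_word_Nil)
  next
    case False
    then obtain i where i: "1 \<le> i" "i < n" "\<not> inv w i < inv w (Suc i)"
      using permutes_eq_id_if_no_descent[OF less.prems] by blast
    have bij_w: "bij w" using less.prems by (rule permutes_bij)
    then have "inv w i \<noteq> inv w (Suc i)"
      by (metis bij_inv_eq_iff n_not_Suc_n)
    with i have descent: "inv w (Suc i) < inv w i" by simp
    let ?w' = "transpose i (Suc i) \<circ> w"
    have w': "?w' permutes {1..n}"
      using less.prems i by (intro permutes_compose permutes_swap_id) auto
    have fewer: "card (inversions n ?w') < card (inversions n w)"
      using i descent by (intro card_inversions_transpose_less bij_w) auto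
    then obtain ws where ws: "length ws \<le> card (inversions n ?w')"
      "\<forall>i\<in>set ws. 1 \<le> i \<and> i < n" "?w' = simple_word ws"
      using less.hyps w' by blast
    have "w = simple_word (i # ws)"
      unfolding simple_word_Cons ws(3)[symmetric] by (simp add: comp_assoc[symmetric])
    with ws fewer i show ?thesis by (intro exI[of _ "i # ws"]) auto
  qed
qed

lemma len_eq_card_inversions:
  assumes "w permutes {1..n}"
  shows "len n w = card (inversions n w)"
  unfolding len_def
proof (rule Least_equality)
  obtain ws where ws: "length ws \<le> card (inversions n w)"
    "\<forall>i\<in>set ws. 1 \<le> i \<and> i < n" "w = simple_word ws"
    using ex_simple_word_inversions[OF assms] by blast
  with card_inversions_simple_word_le have "length ws = card (inversions n w)"
    by (metis le_antisym)
  with ws show "\<exists>is. length is = card (inversions n w) \<and> (\<forall>i\<in>set is. 1 \<le> i \<and> i < n) \<and> w = simple_word is"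
    by blast
next
  fix k
  assume "\<exists>is. length is = k \<and> (\<forall>i\<in>set is. 1 \<le> i \<and> i < n) \<and> w = simple_word is"
  then show "card (inversions n w) \<le> k"
    using card_inversions_simple_word_le by blast
qed

lemma bruhat_edge_eq_comp:
  assumes "bruhat_edge n w t w'"
  shows "w' = t \<circ> w"
proof -
  have w: "w permutes {1..n}" and t: "w' \<circ> inv w = t"
    using assms by (auto simp: bruhat_edge_def Sym_def)
  have "w' = (w' \<circ> inv w) \<circ> w"
    using w by (simp add: comp_assoc permutes_inv_o(2))
  with t show ?thesis by simp
qed

lemma transpose_in_TranspD:
  assumes "transpose a b \<in> Transp n"
  shows "a \<noteq> b" "a \<in> {1..n}" "b \<in> {1..n}"
proof -
  obtain c d where cd: "transpose a b = transpose c d" "c \<in> {1..n}" "d \<in> {1..n}" "c \<noteq> d"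
    using assms by (auto simp: Transp_def)
  show "a \<noteq> b"
  proof
    assume "a = b"
    then have "transpose c d = id" using cd(1) by simp
    with cd(4) show False by (simp add: transpose_eq_id_iff)
  qed
  then have "transpose c d a \<noteq> a" "transpose c d b \<noteq> b"
    unfolding cd(1)[symmetric] by simp_all
  then have "a \<in> {c, d}" "b \<in> {c, d}"
    by (auto simp: transpose_def split: if_splits)
  with cd show "a \<in> {1..n}" "b \<in> {1..n}" by auto
qed

lemma bruhat_edge_transpose_inv_less:
  assumes edge: "bruhat_edge n w (transpose a b) w'" and "a < b"
  shows "inv w a < inv w b"
proof (rule ccontr)
  assume "\<not> inv w a < inv w b"
  have w: "w permutes {1..n}" and w': "w' permutes {1..n}"
    and longer: "len n w < len n w'" and "transpose a b \<in> Transp n"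
    using edge by (auto simp: bruhat_edge_def Sym_def)
  then have ab: "a \<in> {1..n}" "b \<in> {1..n}" by (auto dest: transpose_in_TranspD)
  have bij_w: "bij w" using w by (rule permutes_bij)
  then have "inv w a \<noteq> inv w b" using \<open>a < b\<close> by (metis bij_inv_eq_iff less_irrefl)
  with \<open>\<not> inv w a < inv w b\<close> have "inv w b < inv w a" by simp
  then have "card (inversions n (transpose a b \<circ> w)) < card (inversions n w)"
    by (rule card_inversions_transpose_less[OF bij_w ab \<open>a < b\<close>])
  then have "len n w' < len n w"
    using len_eq_card_inversions[OF w] len_eq_card_inversions[OF w'] bruhat_edge_eq_comp[OF edge]
    by simp
  with longer show False by simp
qed

lemma bruhat_edge_transpose_inv_less_iff:
  assumes edge: "bruhat_edge n w (transpose a b) w'"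
  shows "inv w a < inv w b \<longleftrightarrow> a < b"
proof -
  have "a \<noteq> b" using edge by (auto simp: bruhat_edge_def dest: transpose_in_TranspD)
  moreover have "bruhat_edge n w (transpose b a) w'"
    using edge by (simp add: transpose_commute)
  ultimately show ?thesis
    using bruhat_edge_transpose_inv_less[OF edge] bruhat_edge_transpose_inv_less[of n w b a w']
    by (metis less_asym linorder_neqE_nat)
qed

lemma transpose_comp_transpose_fixing_eq_id:
  assumes "e \<noteq> f" and fixes_e: "(transpose g h \<circ> transpose e f) e = e"
  shows "transpose g h \<circ> transpose e f = id"
proof -
  have "transpose g h f = e" using fixes_e by simp
  with \<open>e \<noteq> f\<close> have "transpose g h = transpose e f"
    by (auto simp: transpose_def fun_eq_iff split: if_splits)
  then show ?thesis by simp
qed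

lemma transpose_comp_transpose_moves:
  assumes "e \<noteq> f" "transpose g h \<circ> transpose e f \<noteq> id"
  shows "(transpose g h \<circ> transpose e f) e \<noteq> e" "(transpose g h \<circ> transpose e f) f \<noteq> f"
  using assms transpose_comp_transpose_fixing_eq_id[of e f g h]
    transpose_comp_transpose_fixing_eq_id[of f e g h]
  by (auto simp: transpose_commute)

lemma three_cycle_factor_cases:
  assumes prod: "transpose g h \<circ> transpose e f = transpose a c \<circ> transpose a b"
    and distinct: "a \<noteq> b" "a \<noteq> c" "b \<noteq> c" and "e \<noteq> f"
  shows "(transpose e f = transpose a b \<and> transpose g h = transpose a c)
       \<or> (transpose e f = transpose b c \<and> transpose g h = transpose a b)
       \<or> (transpose e f = transpose a c \<and> transpose g h = transpose b c)"
proof -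
  let ?\<sigma> = "transpose a c \<circ> transpose a b"
  have "?\<sigma> \<noteq> id"
    using distinct by (auto simp: fun_eq_iff transpose_def intro!: exI[of _ a])
  then have "?\<sigma> e \<noteq> e" "?\<sigma> f \<noteq> f"
    using transpose_comp_transpose_moves[OF \<open>e \<noteq> f\<close>] prod by metis+
  then have "e \<in> {a, b, c}" "f \<in> {a, b, c}"
    by (auto simp: transpose_def split: if_splits)
  then have "transpose e f \<in> {transpose a b, transpose b c, transpose a c}"
    using \<open>e \<noteq> f\<close> by (auto simp: transpose_commute)
  moreover have "transpose g h = ?\<sigma> \<circ> transpose e f"
    using prod by (metis comp_assoc comp_id transpose_comp_involutory)
  moreover have "?\<sigma> \<circ> transpose b c = transpose a b" "?\<sigma> \<circ> transpose a c = transpose b c"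
    using distinct by (auto simp: fun_eq_iff transpose_def)
  ultimately show ?thesis
    by (auto simp: comp_assoc)
qed

lemma commuting_transpositions_disjoint:
  assumes "a \<noteq> b" "c \<noteq> d" "transpose a b \<noteq> transpose c d"
    and commute: "transpose a b \<circ> transpose c d = transpose c d \<circ> transpose a b"
  shows "a \<noteq> c" "a \<noteq> d" "b \<noteq> c" "b \<noteq> d"
proof -
  have "transpose a b (transpose c d z) = transpose c d (transpose a b z)" for z
    using commute by (metis comp_apply)
  from this[of a] this[of b] this[of c] this[of d] assms(1-3)
  show "a \<noteq> c" "a \<noteq> d" "b \<noteq> c" "b \<noteq> d"
    by (auto simp: transpose_def split: if_splits)
qed

lemma commuting_transpositions_factor_cases:
  assumes prod: "transpose g h \<circ> transpose e f = transpose c d \<circ> transpose a b"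
    and distinct: "a \<noteq> b" "c \<noteq> d" "e \<noteq> f" "transpose a b \<noteq> transpose c d"
    and commute: "transpose a b \<circ> transpose c d = transpose c d \<circ> transpose a b"
  shows "(transpose e f = transpose a b \<and> transpose g h = transpose c d)
       \<or> (transpose e f = transpose c d \<and> transpose g h = transpose a b)"
proof -
  note disjoint = commuting_transpositions_disjoint[OF distinct(1,2,4) commute]
  let ?\<sigma> = "transpose c d \<circ> transpose a b"
  have "?\<sigma> \<noteq> id"
    using distinct disjoint by (auto simp: fun_eq_iff transpose_def intro!: exI[of _ a])
  then have "?\<sigma> e \<noteq> e" "?\<sigma> f \<noteq> f"
    using transpose_comp_transpose_moves[OF \<open>e \<noteq> f\<close>] prod by metis+
  then have ef: "e \<in> {a, b, c, d}" "f \<in> {a, b, c, d}"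
    by (auto simp: transpose_def split: if_splits)
  have gh: "transpose g h = ?\<sigma> \<circ> transpose e f"
    using prod by (metis comp_assoc comp_id transpose_comp_involutory)
  \<comment> \<open>\<open>?\<sigma> \<circ> (e f)\<close> must be an involution, which fails if \<open>e\<close>, \<open>f\<close> lie in different pairs\<close>
  have "(?\<sigma> \<circ> transpose e f) ((?\<sigma> \<circ> transpose e f) z) = z" for z
    unfolding gh[symmetric] by simp
  from this[of e] this[of f] ef distinct(1-3) disjoint
  have "transpose e f = transpose a b \<or> transpose e f = transpose c d"
    by (auto simp: transpose_def fun_eq_iff split: if_splits)
  moreover have "?\<sigma> \<circ> transpose a b = transpose c d" "?\<sigma> \<circ> transpose c d = transpose a b"
    using commute by (simp_all add: comp_assoc) (metis comp_assoc comp_id transpose_comp_involutory)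
  ultimately show ?thesis
    unfolding gh by auto
qed

locale bruhat_flip =
  fixes n :: nat and u x y v p q s t :: "nat \<Rightarrow> nat"
  assumes edge_ux: "bruhat_edge n u p x" and edge_xv: "bruhat_edge n x q v"
    and edge_uy: "bruhat_edge n u s y" and edge_yv: "bruhat_edge n y t v"
    and flip: "y \<noteq> x"
begin

lemma bij_u: "bij u"
  using edge_ux by (auto simp: bruhat_edge_def Sym_def permutes_bij)

lemma flip_comp_eq: "t \<circ> s = q \<circ> p"
proof -
  have "t \<circ> s \<circ> u = q \<circ> p \<circ> u"
    using bruhat_edge_eq_comp[OF edge_ux] bruhat_edge_eq_comp[OF edge_xv]
      bruhat_edge_eq_comp[OF edge_uy] bruhat_edge_eq_comp[OF edge_yv]
    by (simp add: comp_assoc)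
  then show ?thesis
    using bij_u by (metis bij_is_surj comp_assoc comp_id surj_iff)
qed

lemma flip_first_ne: "s \<noteq> p"
  using flip bruhat_edge_eq_comp[OF edge_ux] bruhat_edge_eq_comp[OF edge_uy] by auto

lemma path_transpositions_ne: "p \<noteq> q"
proof
  assume "p = q"
  obtain a b where p: "p = transpose a b"
    using edge_ux by (auto simp: bruhat_edge_def Transp_def)
  have "v = (p \<circ> p) \<circ> u"
    using bruhat_edge_eq_comp[OF edge_ux] bruhat_edge_eq_comp[OF edge_xv] \<open>p = q\<close>
    by (simp add: comp_assoc)
  with p have "v = u" by simp
  moreover have "len n u < len n v"
    using edge_ux edge_xv by (auto simp: bruhat_edge_def)
  ultimately show False by simp
qed

lemma obtain_transpositions:
  obtains a b c d e f g h
  where "p = transpose a b" "q = transpose c d" "s = transpose e f" "t = transpose g h"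
    "a \<noteq> b" "c \<noteq> d" "e \<noteq> f" "g \<noteq> h"
  using edge_ux edge_xv edge_uy edge_yv unfolding bruhat_edge_def Transp_def by blast

lemma commuting_flip:
  assumes "p \<circ> q = q \<circ> p"
  shows "s = q \<and> t = p"
proof -
  obtain a b c d e f g h
    where "p = transpose a b" "q = transpose c d" "s = transpose e f" "t = transpose g h"
    "a \<noteq> b" "c \<noteq> d" "e \<noteq> f" "g \<noteq> h"
    by (rule obtain_transpositions)
  then show ?thesis
    using commuting_transpositions_factor_cases[of g h e f c d a b] assms
      flip_comp_eq flip_first_ne path_transpositions_ne
    by auto
qed

lemma three_cycle_flip:
  assumes p: "p = transpose a b" and q: "q = transpose a c"
    and distinct: "a \<noteq> b" "a \<noteq> c" "b \<noteq> c"
  shows "((a < b \<and> b < c \<or> a > b \<and> b > c) \<longrightarrow> s = transpose b c \<and> t = transpose a b)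
       \<and> ((a < c \<and> c < b \<or> a > c \<and> c > b) \<longrightarrow> s = transpose a c \<and> t = transpose b c)
       \<and> ((b < a \<and> a < c \<or> b > a \<and> a > c) \<longrightarrow>
            (if inv u b < inv u a \<and> inv u a < inv u c \<or> inv u c < inv u a \<and> inv u a < inv u b
             then s = transpose a c \<and> t = transpose b c
             else s = transpose b c \<and> t = transpose a b))"
proof -
  have inv_x: "inv x = inv u \<circ> transpose a b"
    using bruhat_edge_eq_comp[OF edge_ux] bij_u p by (simp add: inv_transpose_comp)
  have pos_distinct: "inv u a \<noteq> inv u b" "inv u a \<noteq> inv u c" "inv u b \<noteq> inv u c"
    using distinct bij_u by (metis bij_inv_eq_iff)+
  have order_ux: "inv u a < inv u b \<longleftrightarrow> a < b"
    using bruhat_edge_transpose_inv_less_iff edge_ux p by blast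
  have order_xv: "inv u b < inv u c \<longleftrightarrow> a < c"
    using bruhat_edge_transpose_inv_less_iff[of n x a c v] edge_xv q inv_x distinct by simp
  have ne: "transpose b c \<noteq> transpose a c" "transpose a b \<noteq> transpose b c" "transpose a c \<noteq> transpose a b"
    using distinct by (auto simp: fun_eq_iff transpose_def)
  obtain e f g h where s: "s = transpose e f" and t: "t = transpose g h" and "e \<noteq> f"
    by (rule obtain_transpositions)
  have inv_y: "inv y = inv u \<circ> s"
    using bruhat_edge_eq_comp[OF edge_uy] bij_u s by (simp add: inv_transpose_comp)
  consider (A) "s = transpose b c" "t = transpose a b" | (B) "s = transpose a c" "t = transpose b c"
    using three_cycle_factor_cases[of g h e f a c b] \<open>e \<noteq> f\<close> s t flip_comp_eq flip_first_ne p q distinct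
    by auto
  then show ?thesis
  proof cases
    case A
    have "inv u b < inv u c \<longleftrightarrow> b < c"
      using bruhat_edge_transpose_inv_less_iff edge_uy A by blast
    with order_xv have c_not_between: "a < c \<longleftrightarrow> b < c"
      by simp
    have "inv u a < inv u c \<longleftrightarrow> a < b"
      using bruhat_edge_transpose_inv_less_iff[of n y a b v] edge_yv A inv_y distinct by simp
    with order_ux have "inv u a < inv u b \<longleftrightarrow> inv u a < inv u c"
      by simp
    with c_not_between pos_distinct distinct ne show ?thesis
      by (auto simp: A)
  next
    case B
    have order_uy: "inv u a < inv u c \<longleftrightarrow> a < c"
      using bruhat_edge_transpose_inv_less_iff edge_uy B by blast
    have "inv u b < inv u a \<longleftrightarrow> b < c"
      using bruhat_edge_transpose_inv_less_iff[of n y b c v] edge_yv B inv_y distinct by simp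
    with order_ux pos_distinct distinct have "a < b \<longleftrightarrow> c < b"
      by auto
    with order_ux order_uy pos_distinct distinct ne show ?thesis
      by (auto simp: B)
  qed
qed

end

theorem proposition3p6:
  fixes n :: nat and u x y v p q s t :: "nat \<Rightarrow> nat"
  assumes G1a: "bruhat_edge n u p x" and G1b: "bruhat_edge n x q v"
    and G2a: "bruhat_edge n u s y" and G2b: "bruhat_edge n y t v"
    and flip: "y \<noteq> x"
  shows "(p \<circ> q = q \<circ> p \<longrightarrow> s = q \<and> t = p)
    \<and> (\<forall>a b c. p = transpose a b \<and> q = transpose a c \<and> a \<noteq> b \<and> a \<noteq> c \<and> b \<noteq> c \<longrightarrow>
         ((a < b \<and> b < c \<or> a > b \<and> b > c) \<longrightarrow> s = transpose b c \<and> t = transpose a b)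
       \<and> ((a < c \<and> c < b \<or> a > c \<and> c > b) \<longrightarrow> s = transpose a c \<and> t = transpose b c)
       \<and> ((b < a \<and> a < c \<or> b > a \<and> a > c) \<longrightarrow>
            (if inv u b < inv u a \<and> inv u a < inv u c \<or> inv u c < inv u a \<and> inv u a < inv u b
             then s = transpose a c \<and> t = transpose b c
             else s = transpose b c \<and> t = transpose a b)))"
proof -
  interpret bruhat_flip n u x y v p q s t
    using assms by unfold_locales
  show ?thesis
    using commuting_flip three_cycle_flip by blast
qed

end
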